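(* Let $V_1, V_2$ be disjoint finite sets of nails. Let $h_1 \in F(V_1)$ solve a specification $f_1$ on $V_1$, and $h_2 \in F(V_2)$ solve a specification $f_2$ on $V_2$. Regard $f_1, f_2$ as functions on subsets $S \subseteq V_1 \cup V_2$ via $S \mapsto f_i(S \cap V_i)$. Then, as words in $F(V_1 \cup V_2)$, $h_1 + h_2$ solves $f_1 \wedge f_2$, and the commutator $[h_1, h_2] = h_1 + h_2 - h_1 - h_2$ solves $f_1 \vee f_2$.
   Context: Words are elements of the free group $F(V)$ on a finite set $V$ of nails, written additively ($+$ group operation, $-$ inverse, $0$ identity). For $S \subseteq V$, $h|_S$ is the image of $h$ under the homomorphism killing the generators in $S$ ("removing the nails in $S$"). A specification on $V$ is a monotone function $f: 2^V \to \{\mathsf{hang}, \mathsf{fall}\}$ with $f(V) = \mathsf{fall}$, where $\mathsf{hang} < \mathsf{fall}$ and monotone means $S \subseteq S' \Rightarrow f(S) \le f(S')$. A word $h$ on $V$ solves $f$ if for every $S \subseteq V$: $h|_S = 0 \iff f(S) = \mathsf{fall}$. The operations $\vee$ and $\wedge$ on specifications are pointwise $\max$ and $\min$ with respect to $\mathsf{hang} < \mathsf{fall}$. *)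

theory Defs
  imports Main
begin

text \<open>A word over nails of type 'a is a list of letters (x, b): the generator x
  (b = True) or its inverse -x (b = False). Words represent elements of the free
  group F(V); two words denote the same element iff their free reductions agree.\<close>

type_synonym 'a word = "('a \<times> bool) list"

fun reduce :: "'a word \<Rightarrow> 'a word" where
  "reduce [] = []"
| "reduce (x # xs) =
     (case reduce xs of
        [] \<Rightarrow> [x]
      | y # ys \<Rightarrow> (if fst x = fst y \<and> snd x \<noteq> snd y then ys else x # y # ys))"

definition word_on :: "'a set \<Rightarrow> 'a word \<Rightarrow> bool" where
  "word_on V h \<longleftrightarrow> fst ` set h \<subseteq> V"

definition wplus :: "'a word \<Rightarrow> 'a word \<Rightarrow> 'a word" where
  "wplus h g = h @ g"

definition wneg :: "'a word \<Rightarrow> 'a word" where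
  "wneg h = rev (map (\<lambda>(x, b). (x, \<not> b)) h)"

definition is_zero :: "'a word \<Rightarrow> bool" where
  "is_zero h \<longleftrightarrow> reduce h = []"

definition commutator :: "'a word \<Rightarrow> 'a word \<Rightarrow> 'a word" where
  "commutator h g = wplus (wplus (wplus h g) (wneg h)) (wneg g)"

definition remove_nails :: "'a set \<Rightarrow> 'a word \<Rightarrow> 'a word" where
  "remove_nails S h = filter (\<lambda>(x, b). x \<notin> S) h"

datatype outcome = Hang | Fall

definition outcome_le :: "outcome \<Rightarrow> outcome \<Rightarrow> bool" where
  "outcome_le a b \<longleftrightarrow> a = Hang \<or> b = Fall"

definition is_spec :: "'a set \<Rightarrow> ('a set \<Rightarrow> outcome) \<Rightarrow> bool" where
  "is_spec V f \<longleftrightarrow>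
     (\<forall>S S'. S \<subseteq> S' \<and> S' \<subseteq> V \<longrightarrow> outcome_le (f S) (f S')) \<and> f V = Fall"

definition solves :: "'a set \<Rightarrow> 'a word \<Rightarrow> ('a set \<Rightarrow> outcome) \<Rightarrow> bool" where
  "solves V h f \<longleftrightarrow>
     (\<forall>S. S \<subseteq> V \<longrightarrow> (is_zero (remove_nails S h) \<longleftrightarrow> f S = Fall))"

definition spec_join :: "('a set \<Rightarrow> outcome) \<Rightarrow> ('a set \<Rightarrow> outcome) \<Rightarrow> 'a set \<Rightarrow> outcome" where
  "spec_join f g S = (if f S = Fall \<or> g S = Fall then Fall else Hang)"

definition spec_meet :: "('a set \<Rightarrow> outcome) \<Rightarrow> ('a set \<Rightarrow> outcome) \<Rightarrow> 'a set \<Rightarrow> outcome" where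
  "spec_meet f g S = (if f S = Fall \<and> g S = Fall then Fall else Hang)"

definition spec_extend :: "'a set \<Rightarrow> ('a set \<Rightarrow> outcome) \<Rightarrow> 'a set \<Rightarrow> outcome" where
  "spec_extend W f S = f (S \<inter> W)"

end

theory Submission
  imports Defs
begin

text \<open>Free reduction pushes the letters of a word one at a time onto an already reduced word,
  cancelling against its head; hence the reduced form of xs @ ys depends only on the reduced
  forms of xs and ys. If a and b use disjoint sets of nails, their reduced forms ra and rb
  cannot cancel against each other: a + b reduces to ra rb, and [a, b] reduces to
  ra rb (-ra) (-rb), which is empty only if ra or rb is. Removing nails commutes with the word
  operations, so this applies to h1|_S and h2|_S for every S.\<close>

definition flip :: "'a \<times> bool \<Rightarrow> 'a \<times> bool" where
  "flip x = (fst x, \<not> snd x)"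

definition reduced :: "'a word \<Rightarrow> bool" where
  "reduced w \<longleftrightarrow> successively (\<lambda>x y. y \<noteq> flip x) w"

fun cancel :: "'a \<times> bool \<Rightarrow> 'a word \<Rightarrow> 'a word" where
  "cancel x [] = [x]"
| "cancel x (y # ys) = (if y = flip x then ys else x # y # ys)"

lemma flip_flip [simp]: "flip (flip x) = x"
  by (simp add: flip_def)

lemma reduce_Cons [simp]: "reduce (x # xs) = cancel x (reduce xs)"
  by (cases "reduce xs") (auto simp: flip_def prod_eq_iff)

declare reduce.simps(2) [simp del]

lemma reduce_append: "reduce (xs @ ys) = foldr cancel xs (reduce ys)"
  by (induction xs) simp_all

lemma reduced_Nil [simp]: "reduced []"
  by (simp add: reduced_def)

lemma reduced_cancel: "reduced z \<Longrightarrow> reduced (cancel x z)"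
  by (cases z) (auto simp: reduced_def successively_Cons)

lemma reduced_foldr_cancel: "reduced z \<Longrightarrow> reduced (foldr cancel xs z)"
  by (induction xs) (simp_all add: reduced_cancel)

lemma reduced_reduce: "reduced (reduce w)"
  by (induction w) (simp_all add: reduced_cancel)

lemma reduce_reduced: "reduced w \<Longrightarrow> reduce w = w"
proof (induction w)
  case (Cons x w)
  then show ?case by (cases w) (auto simp: reduced_def successively_Cons)
qed simp

lemma reduce_reduce [simp]: "reduce (reduce w) = reduce w"
  by (simp add: reduce_reduced reduced_reduce)

lemma cancel_flip_cancel: "reduced z \<Longrightarrow> cancel (flip x) (cancel x z) = z"
  by (cases z; cases "tl z") (auto simp: reduced_def)

lemma foldr_cancel_cancel:
  "reduced z \<Longrightarrow> foldr cancel (cancel x w) z = cancel x (foldr cancel w z)"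
  by (cases w) (auto simp: cancel_flip_cancel [of _ "flip x", simplified] reduced_foldr_cancel)

lemma foldr_cancel_reduce: "reduced z \<Longrightarrow> foldr cancel (reduce xs) z = foldr cancel xs z"
  by (induction xs) (simp_all add: foldr_cancel_cancel)

lemma reduce_append_cong:
  assumes "reduce xs = reduce xs'" and "reduce ys = reduce ys'"
  shows "reduce (xs @ ys) = reduce (xs' @ ys')"
proof -
  have "reduce (xs @ ys) = foldr cancel (reduce xs) (reduce ys)"
    by (simp add: reduce_append foldr_cancel_reduce reduced_reduce)
  also have "\<dots> = reduce (xs' @ ys')"
    using assms by (simp add: reduce_append foldr_cancel_reduce reduced_reduce)
  finally show ?thesis .
qed

lemma wneg_Nil [simp]: "wneg [] = []"
  by (simp add: wneg_def)

lemma wneg_Cons: "wneg (x # w) = wneg w @ [flip x]"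
  by (cases x) (simp add: wneg_def flip_def)

lemma wneg_wneg [simp]: "wneg (wneg w) = w"
  by (induction w) (auto simp: wneg_def)

lemma foldr_cancel_wneg: "reduced z \<Longrightarrow> foldr cancel w (foldr cancel (wneg w) z) = z"
proof (induction w arbitrary: z)
  case (Cons x w)
  have "foldr cancel (x # w) (foldr cancel (wneg (x # w)) z)
      = cancel x (foldr cancel w (foldr cancel (wneg w) (cancel (flip x) z)))"
    by (simp add: wneg_Cons)
  also have "\<dots> = z"
    using Cons by (simp add: reduced_cancel cancel_flip_cancel [of _ "flip x", simplified])
  finally show ?case .
qed simp

lemma reduce_append_wneg: "reduce (w @ wneg w) = []"
proof -
  have "reduce (wneg w) = foldr cancel (wneg w) []"
    using reduce_append [of "wneg w" "[]"] by simp
  then show ?thesis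
    by (simp add: reduce_append foldr_cancel_wneg)
qed

lemma reduce_wneg_append: "reduce (wneg w @ w) = []"
  using reduce_append_wneg [of "wneg w"] by simp

lemma reduced_wneg [simp]: "reduced (wneg w) \<longleftrightarrow> reduced w"
proof -
  have "wneg w = rev (map flip w)"
    by (simp add: wneg_def flip_def case_prod_beta)
  then show ?thesis
    unfolding reduced_def by (simp add: successively_map) (rule successively_cong; auto)
qed

lemma reduce_wneg: "reduce (wneg w) = wneg (reduce w)"
proof -
  have "reduce (wneg w) = reduce (wneg w @ (reduce w @ wneg (reduce w)))"
    using reduce_append_cong [of "wneg w" "wneg w" "[]"] by (simp add: reduce_append_wneg)
  also have "\<dots> = reduce ((wneg w @ reduce w) @ wneg (reduce w))"
    by simp
  also have "\<dots> = reduce ([] @ wneg (reduce w))"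
    by (rule reduce_append_cong)
      (simp_all add: reduce_append_cong [of _ _ "reduce w" w] reduce_wneg_append)
  also have "\<dots> = wneg (reduce w)"
    by (simp add: reduce_reduced reduced_reduce)
  finally show ?thesis .
qed

lemma set_cancel: "set (cancel x z) \<subseteq> insert x (set z)"
  by (cases z) auto

lemma set_reduce: "set (reduce w) \<subseteq> set w"
  by (induction w) (use set_cancel in fastforce)+

lemma word_on_reduce: "word_on V w \<Longrightarrow> word_on V (reduce w)"
  using set_reduce unfolding word_on_def by fastforce

lemma word_on_wneg [simp]: "word_on V (wneg w) \<longleftrightarrow> word_on V w"
  by (induction w) (auto simp: word_on_def wneg_Cons flip_def)

lemma reduced_append_disjoint:
  assumes "reduced xs" "reduced ys" "word_on A xs" "word_on B ys" "A \<inter> B = {}"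
  shows "reduced (xs @ ys)"
proof -
  have "hd ys \<noteq> flip (last xs)" if "xs \<noteq> []" "ys \<noteq> []"
  proof -
    have "fst (last xs) \<in> A" "fst (hd ys) \<in> B"
      using that assms(3,4) unfolding word_on_def by auto
    then show ?thesis
      using assms(5) by (auto simp: flip_def)
  qed
  then show ?thesis
    using assms(1,2) by (auto simp: reduced_def successively_append_iff)
qed

lemma reduced_append_overlap:
  "reduced (xs @ ys) \<Longrightarrow> reduced (ys @ zs) \<Longrightarrow> ys \<noteq> [] \<Longrightarrow> reduced (xs @ ys @ zs)"
  by (auto simp: reduced_def successively_append_iff)

lemma is_zero_wplus_disjoint:
  assumes "word_on A a" "word_on B b" "A \<inter> B = {}"
  shows "is_zero (wplus a b) \<longleftrightarrow> is_zero a \<and> is_zero b"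
proof -
  have "reduce (a @ b) = reduce (reduce a @ reduce b)"
    by (rule reduce_append_cong) simp_all
  also have "\<dots> = reduce a @ reduce b"
    using assms by (intro reduce_reduced reduced_append_disjoint reduced_reduce word_on_reduce)
  finally show ?thesis
    by (simp add: is_zero_def wplus_def)
qed

lemma is_zero_commutator_disjoint:
  assumes on_a: "word_on A a" and on_b: "word_on B b" and disjoint: "A \<inter> B = {}"
  shows "is_zero (commutator a b) \<longleftrightarrow> is_zero a \<or> is_zero b"
proof -
  define ra rb where "ra = reduce a" and "rb = reduce b"
  have "reduce (commutator a b) = reduce (ra @ rb @ wneg ra @ wneg rb)"
    unfolding commutator_def wplus_def ra_def rb_def
    by (simp, intro reduce_append_cong) (simp_all add: reduce_wneg)
  also have "\<dots> = (if ra = [] \<or> rb = [] then [] else ra @ rb @ wneg ra @ wneg rb)"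
  proof (cases "ra = [] \<or> rb = []")
    case True
    then show ?thesis
      using reduce_append_wneg [of ra] reduce_append_wneg [of rb] by auto
  next
    case False
    have on: "word_on A ra" "word_on B rb" "word_on A (wneg ra)" "word_on B (wneg rb)"
      using on_a on_b by (simp_all add: ra_def rb_def word_on_reduce)
    have red: "reduced ra" "reduced rb" "reduced (wneg ra)" "reduced (wneg rb)"
      by (simp_all add: ra_def rb_def reduced_reduce)
    have "B \<inter> A = {}"
      using disjoint by blast
    then have "reduced (ra @ rb)" "reduced (rb @ wneg ra)" "reduced (wneg ra @ wneg rb)"
      using reduced_append_disjoint [OF red(1,2) on(1,2) disjoint]
        reduced_append_disjoint [OF red(2,3) on(2,3)]
        reduced_append_disjoint [OF red(3,4) on(3,4) disjoint] by blast+
    then have "reduced (ra @ rb @ wneg ra @ wneg rb)"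
      using False by (intro reduced_append_overlap) (auto simp: wneg_def)
    then show ?thesis
      using False by (simp add: reduce_reduced)
  qed
  finally show ?thesis
    by (simp add: is_zero_def ra_def rb_def)
qed

lemma remove_nails_wneg: "remove_nails S (wneg h) = wneg (remove_nails S h)"
  by (induction h) (auto simp: remove_nails_def wneg_def)

lemma remove_nails_wplus: "remove_nails S (wplus h g) = wplus (remove_nails S h) (remove_nails S g)"
  by (simp add: remove_nails_def wplus_def)

lemma remove_nails_commutator:
  "remove_nails S (commutator h g) = commutator (remove_nails S h) (remove_nails S g)"
  by (simp add: commutator_def remove_nails_wplus remove_nails_wneg)

lemma word_on_remove_nails: "word_on V h \<Longrightarrow> word_on V (remove_nails S h)"
  by (auto simp: word_on_def remove_nails_def)

lemma solves_remove_nails: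
  assumes "solves V h f" and "word_on V h"
  shows "is_zero (remove_nails S h) \<longleftrightarrow> spec_extend V f S = Fall"
proof -
  have "remove_nails S h = remove_nails (S \<inter> V) h"
    using assms(2) unfolding word_on_def remove_nails_def by (intro filter_cong) auto
  then show ?thesis
    using assms(1) by (simp add: solves_def spec_extend_def)
qed

theorem lemma1:
  fixes V1 V2 :: "'a set" and h1 h2 :: "'a word" and f1 f2 :: "'a set \<Rightarrow> outcome"
  assumes "finite V1" and "finite V2" and "V1 \<inter> V2 = {}"
    and "is_spec V1 f1" and "is_spec V2 f2"
    and "word_on V1 h1" and "word_on V2 h2"
    and "solves V1 h1 f1" and "solves V2 h2 f2"
  shows "solves (V1 \<union> V2) (wplus h1 h2)
           (spec_meet (spec_extend V1 f1) (spec_extend V2 f2))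
       \<and> solves (V1 \<union> V2) (commutator h1 h2)
           (spec_join (spec_extend V1 f1) (spec_extend V2 f2))"
proof -
  have "is_zero (remove_nails S (wplus h1 h2))
          \<longleftrightarrow> spec_meet (spec_extend V1 f1) (spec_extend V2 f2) S = Fall"
    and "is_zero (remove_nails S (commutator h1 h2))
          \<longleftrightarrow> spec_join (spec_extend V1 f1) (spec_extend V2 f2) S = Fall" for S
  proof -
    note on = word_on_remove_nails [OF assms(6), of S] word_on_remove_nails [OF assms(7), of S]
    note zero = solves_remove_nails [OF assms(8,6)] solves_remove_nails [OF assms(9,7)]
    show "is_zero (remove_nails S (wplus h1 h2))
          \<longleftrightarrow> spec_meet (spec_extend V1 f1) (spec_extend V2 f2) S = Fall"
      using is_zero_wplus_disjoint [OF on assms(3)]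
      by (simp add: remove_nails_wplus zero spec_meet_def)
    show "is_zero (remove_nails S (commutator h1 h2))
          \<longleftrightarrow> spec_join (spec_extend V1 f1) (spec_extend V2 f2) S = Fall"
      using is_zero_commutator_disjoint [OF on assms(3)]
      by (simp add: remove_nails_commutator zero spec_join_def)
  qed
  then show ?thesis
    by (simp add: solves_def)
qed

end
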